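(* Let $\alpha>-1$ and consider composition operators $C_\phi f=f\circ\phi$ on $L^2_a(dA_\alpha)$. If $\phi(z)=-z$ then $W(C_{\phi})=[-1,1]$, and if $\phi(z)=e^{2\pi i/n}z$ with an integer $n>2$, then $W(C_{\phi})$ is the closed regular polygonal region with $n$ sides inscribed in the unit circle.
   Context: $L^2_a(dA_\alpha)$ is the weighted Bergman space of analytic $f$ on the unit disc $\mathbb{D}$ with $\int_{\mathbb{D}}|f|^2dA_\alpha<\infty$, $dA_{\alpha}(z)=(\alpha+1)(1-|z|^2)^{\alpha}dA(z)$, $dA$ normalized area measure. $W(T)=\{\langle Tf,f\rangle:\|f\|=1\}$ is the numerical range. *)

theory Defs
  imports "HOL-Analysis.Analysis"
begin

text \<open>Weight of the measure dA_alpha with respect to Lebesgue measure on the plane: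
  dA_alpha(z) = (alpha+1)(1-|z|^2)^alpha dA(z), with dA = dx dy / pi the normalized area measure.\<close>
definition bergman_weight :: "real \<Rightarrow> complex \<Rightarrow> real" where
  "bergman_weight \<alpha> z = (\<alpha> + 1) / pi * (1 - (cmod z)\<^sup>2) powr \<alpha>"

definition bergman_space :: "real \<Rightarrow> (complex \<Rightarrow> complex) set" where
  "bergman_space \<alpha> = {f. f holomorphic_on ball 0 1 \<and>
      set_integrable lborel (ball 0 1) (\<lambda>z. bergman_weight \<alpha> z * (cmod (f z))\<^sup>2)}"

definition bergman_inner :: "real \<Rightarrow> (complex \<Rightarrow> complex) \<Rightarrow> (complex \<Rightarrow> complex) \<Rightarrow> complex" where
  "bergman_inner \<alpha> f g = (LINT z : ball 0 1 | lborel. complex_of_real (bergman_weight \<alpha> z) * f z * cnj (g z))"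

definition bergman_norm :: "real \<Rightarrow> (complex \<Rightarrow> complex) \<Rightarrow> real" where
  "bergman_norm \<alpha> f = sqrt (LINT z : ball 0 1 | lborel. bergman_weight \<alpha> z * (cmod (f z))\<^sup>2)"

definition comp_numerical_range :: "real \<Rightarrow> (complex \<Rightarrow> complex) \<Rightarrow> complex set" where
  "comp_numerical_range \<alpha> \<phi> =
     {bergman_inner \<alpha> (f \<circ> \<phi>) f | f. f \<in> bergman_space \<alpha> \<and> bergman_norm \<alpha> f = 1}"

end

theory Submission
  imports Defs
begin

(* Let u be a primitive n-th root of unity and (C f)(z) = f(u z). Averaging over the cyclic group
   generated by u splits every f in the Bergman space as f = sum_{j<n} g_j with g_j(u z) = u^j g_j(z).
   The measure dA_alpha is rotation invariant, so C is unitary and its eigenfunctions g_j for the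
   distinct eigenvalues u^j are pairwise orthogonal. Hence <C f, f> = sum_j ||g_j||^2 u^j with
   sum_j ||g_j||^2 = ||f||^2 = 1, a convex combination of the n-th roots of unity; conversely
   f = sum_j sqrt(t_j) z^j / ||z^j|| realises the convex combination sum_j t_j u^j. The map z -> -z
   is the case n = 2. *)

lemma
  fixes f :: "'i \<Rightarrow> 'a \<Rightarrow> 'b::{banach, second_countable_topology}"
  assumes "\<And>i. i \<in> I \<Longrightarrow> set_integrable M A (f i)"
  shows set_integrable_sum: "set_integrable M A (\<lambda>x. \<Sum>i\<in>I. f i x)"
    and set_integral_sum:
      "set_lebesgue_integral M A (\<lambda>x. \<Sum>i\<in>I. f i x) = (\<Sum>i\<in>I. set_lebesgue_integral M A (f i))"
  using assms unfolding set_integrable_def set_lebesgue_integral_def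
  by (simp_all add: scaleR_sum_right Bochner_Integration.integral_sum)

section \<open>Rotation invariance of Lebesgue measure on the plane\<close>

lemma measurable_Complex_pair [measurable]:
  "(\<lambda>p::real \<times> real. Complex (fst p) (snd p)) \<in> borel_measurable (lborel \<Otimes>\<^sub>M lborel)"
  unfolding Complex_eq by measurable

lemma lborel_complex_eq_distr_pair:
  "(lborel :: complex measure) = distr (lborel \<Otimes>\<^sub>M lborel) borel (\<lambda>p. Complex (fst p) (snd p))"
proof (rule lborel_eqI)
  fix l u :: complex
  assume le: "\<And>b. b \<in> Basis \<Longrightarrow> l \<bullet> b \<le> u \<bullet> b"
  have "Re l \<le> Re u" "Im l \<le> Im u"
    using le[of 1] le[of \<i>] by (auto simp: Basis_complex_def)
  moreover have "(\<lambda>p. Complex (fst p) (snd p)) -` box l u \<inter> space (lborel \<Otimes>\<^sub>M lborel)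
      = {Re l<..<Re u} \<times> {Im l<..<Im u}"
    by (auto simp: box_complex_eq space_pair_measure)
  ultimately show "emeasure (distr (lborel \<Otimes>\<^sub>M lborel) borel (\<lambda>p. Complex (fst p) (snd p))) (box l u)
      = (\<Prod>b\<in>Basis. (u - l) \<bullet> b)"
    by (simp add: emeasure_distr lborel.emeasure_pair_measure_Times ennreal_mult Basis_complex_def)
qed simp

lemma nn_integral_lborel_complex_Re_Im:
  assumes [measurable]: "f \<in> borel_measurable borel"
  shows "(\<integral>\<^sup>+z. f z \<partial>lborel) = (\<integral>\<^sup>+x. \<integral>\<^sup>+y. f (Complex x y) \<partial>lborel \<partial>lborel)"
  by (subst lborel_complex_eq_distr_pair)
     (simp add: nn_integral_distr lborel.nn_integral_fst[symmetric])

lemma nn_integral_lborel_complex_Im_Re: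
  assumes [measurable]: "f \<in> borel_measurable borel"
  shows "(\<integral>\<^sup>+z. f z \<partial>lborel) = (\<integral>\<^sup>+y. \<integral>\<^sup>+x. f (Complex x y) \<partial>lborel \<partial>lborel)"
  by (subst lborel_complex_eq_distr_pair)
     (simp add: nn_integral_distr lborel_pair.nn_integral_snd[symmetric])

definition shear_Re :: "real \<Rightarrow> complex \<Rightarrow> complex" where
  "shear_Re a z = Complex (Re z + a * Im z) (Im z)"

definition shear_Im :: "real \<Rightarrow> complex \<Rightarrow> complex" where
  "shear_Im a z = Complex (Re z) (Im z + a * Re z)"

lemma shear_Re_measurable [measurable]: "shear_Re a \<in> borel_measurable borel"
  unfolding shear_Re_def Complex_eq by measurable

lemma shear_Im_measurable [measurable]: "shear_Im a \<in> borel_measurable borel"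
  unfolding shear_Im_def Complex_eq by measurable

lemma nn_integral_shear_Re:
  assumes [measurable]: "f \<in> borel_measurable borel"
  shows "(\<integral>\<^sup>+z. f (shear_Re a z) \<partial>lborel) = (\<integral>\<^sup>+z. f z \<partial>lborel)"
proof -
  have "(\<integral>\<^sup>+z. f (shear_Re a z) \<partial>lborel) = (\<integral>\<^sup>+y. \<integral>\<^sup>+x. f (Complex (x + a * y) y) \<partial>lborel \<partial>lborel)"
    using nn_integral_lborel_complex_Im_Re[OF measurable_compose[OF shear_Re_measurable assms]]
    by (simp add: shear_Re_def)
  also have "\<dots> = (\<integral>\<^sup>+y. \<integral>\<^sup>+x. f (Complex x y) \<partial>lborel \<partial>lborel)"
  proof (rule nn_integral_cong)
    fix y
    show "(\<integral>\<^sup>+x. f (Complex (x + a * y) y) \<partial>lborel) = (\<integral>\<^sup>+x. f (Complex x y) \<partial>lborel)"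
      using nn_integral_real_affine[of "\<lambda>x. f (Complex x y)" 1 "a * y"]
      by (simp add: Complex_eq add.commute)
  qed
  also have "\<dots> = (\<integral>\<^sup>+z. f z \<partial>lborel)"
    by (simp add: nn_integral_lborel_complex_Im_Re)
  finally show ?thesis .
qed

lemma nn_integral_shear_Im:
  assumes [measurable]: "f \<in> borel_measurable borel"
  shows "(\<integral>\<^sup>+z. f (shear_Im a z) \<partial>lborel) = (\<integral>\<^sup>+z. f z \<partial>lborel)"
proof -
  have "(\<integral>\<^sup>+z. f (shear_Im a z) \<partial>lborel) = (\<integral>\<^sup>+x. \<integral>\<^sup>+y. f (Complex x (y + a * x)) \<partial>lborel \<partial>lborel)"
    using nn_integral_lborel_complex_Re_Im[OF measurable_compose[OF shear_Im_measurable assms]]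
    by (simp add: shear_Im_def)
  also have "\<dots> = (\<integral>\<^sup>+x. \<integral>\<^sup>+y. f (Complex x y) \<partial>lborel \<partial>lborel)"
  proof (rule nn_integral_cong)
    fix x
    show "(\<integral>\<^sup>+y. f (Complex x (y + a * x)) \<partial>lborel) = (\<integral>\<^sup>+y. f (Complex x y) \<partial>lborel)"
      using nn_integral_real_affine[of "\<lambda>y. f (Complex x y)" 1 "a * x"]
      by (simp add: Complex_eq add.commute)
  qed
  also have "\<dots> = (\<integral>\<^sup>+z. f z \<partial>lborel)"
    by (simp add: nn_integral_lborel_complex_Re_Im)
  finally show ?thesis .
qed

(* The three-shear factorisation of a rotation by the angle theta, with t = tan (theta / 2). *)
lemma rotation_eq_shears:
  assumes "norm w = 1" "Re w \<noteq> -1"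
  defines "t \<equiv> Im w / (1 + Re w)"
  shows "w * z = shear_Re (- t) (shear_Im (Im w) (shear_Re (- t) z))"
proof -
  have "(Re w)\<^sup>2 + (Im w)\<^sup>2 = 1" "1 + Re w \<noteq> 0"
    using assms(1,2) by (auto simp: cmod_def)
  then have t: "t * (1 + Re w) = Im w" "Im w * t = 1 - Re w"
    unfolding t_def by (simp_all add: field_simps power2_eq_square)
  have "Re z - t * Im z - t * (Im z + Im w * (Re z - t * Im z))
      = (1 - Im w * t) * Re z - t * (1 + (1 - Im w * t)) * Im z"
    by (simp add: algebra_simps)
  then have real_part: "Re z - t * Im z - t * (Im z + Im w * (Re z - t * Im z)) = Re w * Re z - Im w * Im z"
    using t by simp
  have imaginary_part: "Im z + Im w * (Re z - t * Im z) = Im w * Re z + (1 - Im w * t) * Im z"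
    by (simp add: algebra_simps)
  show ?thesis
    using t real_part imaginary_part by (simp add: shear_Re_def shear_Im_def complex_eq_iff)
qed

lemma nn_integral_lborel_rotation:
  fixes f :: "complex \<Rightarrow> ennreal" and w :: complex
  assumes [measurable]: "f \<in> borel_measurable borel" and "norm w = 1"
  shows "(\<integral>\<^sup>+z. f (w * z) \<partial>lborel) = (\<integral>\<^sup>+z. f z \<partial>lborel)"
proof -
  have by_shears: "(\<integral>\<^sup>+z. g (v * z) \<partial>lborel) = (\<integral>\<^sup>+z. g z \<partial>lborel)"
    if [measurable]: "g \<in> borel_measurable borel" and v: "norm v = 1" "Re v \<noteq> -1"
    for g :: "complex \<Rightarrow> ennreal" and v
  proof -
    define t where "t = Im v / (1 + Re v)"
    have "(\<integral>\<^sup>+z. g (v * z) \<partial>lborel)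
        = (\<integral>\<^sup>+z. g (shear_Re (- t) (shear_Im (Im v) (shear_Re (- t) z))) \<partial>lborel)"
      using rotation_eq_shears[OF v] by (simp add: t_def)
    also have "\<dots> = (\<integral>\<^sup>+z. g (shear_Re (- t) (shear_Im (Im v) z)) \<partial>lborel)"
      by (rule nn_integral_shear_Re[where f = "\<lambda>z. g (shear_Re (- t) (shear_Im (Im v) z))"]) measurable
    also have "\<dots> = (\<integral>\<^sup>+z. g (shear_Re (- t) z) \<partial>lborel)"
      by (rule nn_integral_shear_Im[where f = "\<lambda>z. g (shear_Re (- t) z)"]) measurable
    also have "\<dots> = (\<integral>\<^sup>+z. g z \<partial>lborel)"
      by (rule nn_integral_shear_Re) measurable
    finally show ?thesis .
  qed
  show ?thesis
  proof (cases "Re w = -1")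
    case True
    \<comment> \<open>the shears degenerate for the half-turn, but it is the square of the quarter-turn\<close>
    then have "w = \<i> * \<i>"
      using \<open>norm w = 1\<close> by (simp add: complex_eq_iff cmod_def)
    then show ?thesis
      using by_shears[of "\<lambda>z. f (\<i> * z)" \<i>] by_shears[of f \<i>] by (simp add: mult.assoc)
  qed (use by_shears assms in blast)
qed

lemma lborel_distr_rotation:
  assumes "norm w = 1"
  shows "distr lborel borel (\<lambda>z::complex. w * z) = lborel"
proof (rule measure_eqI)
  fix A :: "complex set"
  assume "A \<in> sets (distr lborel borel (\<lambda>z. w * z))"
  then have [measurable]: "A \<in> sets borel" by simp
  have "emeasure (distr lborel borel (\<lambda>z. w * z)) A
      = (\<integral>\<^sup>+z. indicator A z \<partial>distr lborel borel (\<lambda>z. w * z))"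
    by (simp add: nn_integral_indicator)
  also have "\<dots> = (\<integral>\<^sup>+z. indicator A (w * z) \<partial>lborel)"
    by (subst nn_integral_distr) auto
  also have "\<dots> = emeasure lborel A"
    using assms by (simp add: nn_integral_lborel_rotation)
  finally show "emeasure (distr lborel borel (\<lambda>z. w * z)) A = emeasure lborel A" .
qed simp

lemma
  fixes f :: "complex \<Rightarrow> 'b::{banach, second_countable_topology}"
  assumes w: "norm w = 1" and f: "set_borel_measurable lborel (ball 0 r) f"
  shows set_integral_ball_rotation:
      "set_lebesgue_integral lborel (ball 0 r) (\<lambda>z. f (w * z)) = set_lebesgue_integral lborel (ball 0 r) f"
    and set_integrable_ball_rotation_iff:
      "set_integrable lborel (ball 0 r) (\<lambda>z. f (w * z)) \<longleftrightarrow> set_integrable lborel (ball 0 r) f"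
proof -
  define H where "H = (\<lambda>z. indicator (ball 0 r) z *\<^sub>R f z)"
  have H: "H \<in> borel_measurable borel"
    using f by (simp add: H_def set_borel_measurable_def)
  have Hw: "(\<lambda>z. H (w * z)) = (\<lambda>z. indicator (ball 0 r) z *\<^sub>R f (w * z))"
    using w by (auto simp: H_def norm_mult indicator_def)
  have rot: "(\<lambda>z. w * z) \<in> measurable lborel borel"
    by simp
  have "set_lebesgue_integral lborel (ball 0 r) (\<lambda>z. f (w * z)) = integral\<^sup>L lborel (\<lambda>z. H (w * z))"
    by (simp add: set_lebesgue_integral_def Hw)
  also have "\<dots> = integral\<^sup>L (distr lborel borel (\<lambda>z. w * z)) H"
    by (rule integral_distr[OF rot H, symmetric])
  finally show "set_lebesgue_integral lborel (ball 0 r) (\<lambda>z. f (w * z)) = set_lebesgue_integral lborel (ball 0 r) f"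
    by (simp add: lborel_distr_rotation[OF w] set_lebesgue_integral_def H_def)
  have "set_integrable lborel (ball 0 r) (\<lambda>z. f (w * z)) \<longleftrightarrow> integrable lborel (\<lambda>z. H (w * z))"
    by (simp add: set_integrable_def Hw)
  also have "\<dots> \<longleftrightarrow> integrable (distr lborel borel (\<lambda>z. w * z)) H"
    by (rule integrable_distr_eq[OF rot H, symmetric])
  finally show "set_integrable lborel (ball 0 r) (\<lambda>z. f (w * z)) \<longleftrightarrow> set_integrable lborel (ball 0 r) f"
    by (simp add: lborel_distr_rotation[OF w] set_integrable_def H_def)
qed

section \<open>Integrability of the weight\<close>

definition dyadic_annulus :: "nat \<Rightarrow> complex set" where
  "dyadic_annulus k = ball 0 (1 - (1/2) ^ Suc k) - ball 0 (1 - (1/2) ^ k)"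

lemma emeasure_dyadic_annulus_le: "emeasure lborel (dyadic_annulus k) \<le> ennreal (pi * (1/2) ^ k)"
proof -
  define r :: real where "r = 1 - (1/2) ^ k"
  define s :: real where "s = 1 - (1/2) ^ Suc k"
  have rs: "0 \<le> r" "r \<le> s" "s < 1"
    by (simp_all add: r_def s_def power_le_one)
  have "emeasure lborel (dyadic_annulus k) = emeasure lborel (ball (0::complex) s) - emeasure lborel (ball (0::complex) r)"
    unfolding dyadic_annulus_def r_def[symmetric] s_def[symmetric]
    by (rule emeasure_Diff) (use rs emeasure_lborel_ball_finite[of "0::complex" r] in auto)
  also have "\<dots> = ennreal (pi * s\<^sup>2 - pi * r\<^sup>2)"
    using rs by (simp add: emeasure_ball unit_ball_vol_2 ennreal_minus)
  also have "pi * s\<^sup>2 - pi * r\<^sup>2 \<le> pi * (1/2) ^ k"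
  proof -
    have "s\<^sup>2 - r\<^sup>2 = (s - r) * (s + r)"
      by (simp add: power2_eq_square algebra_simps)
    also have "\<dots> \<le> (s - r) * 2"
      using rs by (intro mult_left_mono) auto
    also have "\<dots> = (1/2) ^ k"
      by (simp add: r_def s_def)
    finally show ?thesis
      by (simp add: right_diff_distrib[symmetric])
  qed
  finally show ?thesis
    by (simp add: ennreal_leI)
qed

lemma disc_subset_Union_dyadic_annulus: "ball 0 1 \<subseteq> (\<Union>k. dyadic_annulus k)"
proof
  fix z :: complex
  assume "z \<in> ball 0 1"
  then obtain n where "(1/2::real) ^ n < 1 - norm z"
    using real_arch_pow_inv[of "1 - norm z" "1/2"] by auto
  then obtain k where "\<not> norm z < 1 - (1/2) ^ k" "norm z < 1 - (1/2) ^ Suc k"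
    using ex_least_nat_less[of "\<lambda>k. norm z < 1 - (1/2) ^ k" n] by auto
  then show "z \<in> (\<Union>k. dyadic_annulus k)"
    by (auto simp: dyadic_annulus_def)
qed

lemma disc_weight_le_on_dyadic_annulus:
  assumes "z \<in> dyadic_annulus k"
  shows "(1 - (cmod z)\<^sup>2) powr \<alpha> \<le> (2 powr max 0 (- \<alpha>)) ^ Suc k"
proof -
  have z: "1 - (1/2) ^ k \<le> norm z" "norm z < 1 - (1/2) ^ Suc k"
    using assms by (auto simp: dyadic_annulus_def)
  have "(1/2) ^ Suc k \<le> 1 - norm z"
    using z by simp
  also have "\<dots> \<le> 1 - (cmod z)\<^sup>2"
    using z by (simp add: power2_eq_square mult_left_le)
  finally have lower: "(1/2) ^ Suc k \<le> 1 - (cmod z)\<^sup>2" .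
  show ?thesis
  proof (cases "\<alpha> \<ge> 0")
    case True
    have "0 \<le> 1 - (cmod z)\<^sup>2"
      using lower zero_le_power[of "1/2::real" "Suc k"] by linarith
    then have "(1 - (cmod z)\<^sup>2) powr \<alpha> \<le> 1"
      using True by (intro powr_le1) auto
    then show ?thesis
      using True by simp
  next
    case False
    have "(1 - (cmod z)\<^sup>2) powr \<alpha> \<le> ((1/2) ^ Suc k) powr \<alpha>"
      using False lower by (intro powr_mono2') auto
    also have "\<dots> = (2 powr (- \<alpha>)) ^ Suc k"
      by (simp add: powr_minus_divide powr_divide powr_mult powr_powr mult.commute flip: powr_realpow)
    finally show ?thesis
      using False by simp
  qed
qed

lemma disc_weight_le_dyadic_annuli_series:
  "ennreal (indicator (ball 0 1) z * (1 - (cmod z)\<^sup>2) powr \<alpha>)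
    \<le> (\<Sum>k. ennreal ((2 powr max 0 (- \<alpha>)) ^ Suc k) * indicator (dyadic_annulus k) z)"
proof (cases "z \<in> ball 0 1")
  case True
  then obtain k where k: "z \<in> dyadic_annulus k"
    using disc_subset_Union_dyadic_annulus by blast
  have "ennreal (indicator (ball 0 1) z * (1 - (cmod z)\<^sup>2) powr \<alpha>)
      \<le> ennreal ((2 powr max 0 (- \<alpha>)) ^ Suc k) * indicator (dyadic_annulus k) z"
    using True k disc_weight_le_on_dyadic_annulus[OF k, of \<alpha>] by simp
  also have "\<dots> \<le> (\<Sum>i. ennreal ((2 powr max 0 (- \<alpha>)) ^ Suc i) * indicator (dyadic_annulus i) z)"
    using sum_le_suminf[of "\<lambda>i. ennreal ((2 powr max 0 (- \<alpha>)) ^ Suc i) * indicator (dyadic_annulus i) z" "{k}"]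
    by (simp del: sum_mult_indicator)
  finally show ?thesis .
qed simp

lemma nn_integral_dyadic_annuli_series_finite:
  assumes "0 < q" "q < 2"
  shows "(\<integral>\<^sup>+z. (\<Sum>k. ennreal (q ^ Suc k) * indicator (dyadic_annulus k) z) \<partial>lborel) < \<infinity>"
proof -
  have annuli_measurable: "dyadic_annulus k \<in> sets lborel" for k
    by (simp add: dyadic_annulus_def)
  have "(\<integral>\<^sup>+z. (\<Sum>k. ennreal (q ^ Suc k) * indicator (dyadic_annulus k) z) \<partial>lborel)
      = (\<Sum>k. ennreal (q ^ Suc k) * emeasure lborel (dyadic_annulus k))"
    using annuli_measurable by (simp add: nn_integral_suminf nn_integral_cmult_indicator)
  also have "\<dots> \<le> (\<Sum>k. ennreal (q ^ Suc k) * ennreal (pi * (1/2) ^ k))"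
    by (intro suminf_le mult_left_mono emeasure_dyadic_annulus_le) auto
  also have "\<dots> = (\<Sum>k. ennreal ((q * pi) * (q / 2) ^ k))"
  proof (rule suminf_cong)
    fix k
    have "q ^ Suc k * (pi * (1/2) ^ k) = (q * pi) * (q / 2) ^ k"
      by (simp add: power_divide)
    then show "ennreal (q ^ Suc k) * ennreal (pi * (1/2) ^ k) = ennreal ((q * pi) * (q / 2) ^ k)"
      using assms by (subst ennreal_mult[symmetric]) auto
  qed
  also have "\<dots> = ennreal (\<Sum>k. (q * pi) * (q / 2) ^ k)"
    using assms by (intro suminf_ennreal2) (auto intro!: summable_mult summable_geometric)
  finally show ?thesis
    using le_less_trans by fastforce
qed

lemma continuous_on_disc_weight: "continuous_on (ball 0 1) (\<lambda>z::complex. (1 - (cmod z)\<^sup>2) powr \<alpha>)"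
proof -
  have "0 < 1 - (cmod z)\<^sup>2" if "z \<in> ball 0 1" for z :: complex
    using that by (simp add: abs_square_less_1)
  then show ?thesis
    by (intro continuous_intros) force+
qed

(* Summing the bound of the previous lemmas over the annuli gives a geometric series with ratio
   2 powr max 0 (-alpha) / 2, which is < 1 exactly when alpha > -1. *)
lemma set_integrable_disc_weight:
  assumes "\<alpha> > -1"
  shows "set_integrable lborel (ball (0::complex) 1) (\<lambda>z. (1 - (cmod z)\<^sup>2) powr \<alpha>)"
proof -
  define g :: "complex \<Rightarrow> real" where "g = (\<lambda>z. indicator (ball 0 1) z * (1 - (cmod z)\<^sup>2) powr \<alpha>)"
  have "g \<in> borel_measurable lborel"
    using borel_measurable_continuous_on_indicator[OF _ continuous_on_disc_weight[of \<alpha>]]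
    by (simp add: g_def)
  moreover have "0 < 2 powr max 0 (- \<alpha>)" "2 powr max 0 (- \<alpha>) < (2::real)"
    using assms powr_less_mono[of "max 0 (- \<alpha>)" 1 2] by auto
  then have "(\<integral>\<^sup>+z. g z \<partial>lborel) < \<infinity>"
    unfolding g_def
    by (rule le_less_trans[OF nn_integral_mono[OF disc_weight_le_dyadic_annuli_series]
                              nn_integral_dyadic_annuli_series_finite])
  moreover have "AE z in lborel. 0 \<le> g z"
    by (simp add: g_def)
  ultimately have "integrable lborel g"
    by (intro integrableI_nonneg)
  then show ?thesis
    by (simp add: set_integrable_def g_def)
qed

section \<open>The weighted Bergman space\<close>

lemma bergman_weight_pos:
  assumes "\<alpha> > -1" "z \<in> ball 0 1"
  shows "0 < bergman_weight \<alpha> z"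
proof -
  have "(cmod z)\<^sup>2 < 1"
    using assms(2) by (simp add: abs_square_less_1)
  then show ?thesis
    using assms(1) by (simp add: bergman_weight_def)
qed

lemma continuous_on_bergman_weight: "continuous_on (ball 0 1) (bergman_weight \<alpha>)"
  unfolding bergman_weight_def by (intro continuous_intros continuous_on_disc_weight)

lemma set_integrable_bergman_weight:
  "\<alpha> > -1 \<Longrightarrow> set_integrable lborel (ball 0 1) (bergman_weight \<alpha>)"
  unfolding bergman_weight_def using set_integrable_disc_weight
  by (intro set_integrable_mult_right) auto

lemma bergman_weight_rotation: "norm u = 1 \<Longrightarrow> bergman_weight \<alpha> (u * z) = bergman_weight \<alpha> z"
  by (simp add: bergman_weight_def norm_mult)

lemma set_borel_measurable_disc:
  fixes h :: "complex \<Rightarrow> 'b::real_normed_vector"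
  shows "continuous_on (ball 0 1) h \<Longrightarrow> set_borel_measurable lborel (ball 0 1) h"
  using set_measurable_continuous_on[of "ball 0 1" h] by (simp add: set_borel_measurable_def)

lemma bergman_space_holomorphic: "f \<in> bergman_space \<alpha> \<Longrightarrow> f holomorphic_on ball 0 1"
  by (simp add: bergman_space_def)

lemma bergman_space_continuous_on: "f \<in> bergman_space \<alpha> \<Longrightarrow> continuous_on (ball 0 1) f"
  by (simp add: bergman_space_def holomorphic_on_imp_continuous_on)

lemma bergman_space_set_integrable:
  "f \<in> bergman_space \<alpha> \<Longrightarrow> set_integrable lborel (ball 0 1) (\<lambda>z. bergman_weight \<alpha> z * (cmod (f z))\<^sup>2)"
  by (simp add: bergman_space_def)

lemma bergman_space_memI:
  assumes "\<alpha> > -1" and h: "h holomorphic_on ball 0 1"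
    and G: "set_integrable lborel (ball 0 1) G"
    and le: "\<And>z. z \<in> ball 0 1 \<Longrightarrow> bergman_weight \<alpha> z * (cmod (h z))\<^sup>2 \<le> G z"
  shows "h \<in> bergman_space \<alpha>"
proof -
  have "set_integrable lborel (ball 0 1) (\<lambda>z. bergman_weight \<alpha> z * (cmod (h z))\<^sup>2)"
  proof (rule set_integrable_bound[OF G])
    show "set_borel_measurable lborel (ball 0 1) (\<lambda>z. bergman_weight \<alpha> z * (cmod (h z))\<^sup>2)"
      using holomorphic_on_imp_continuous_on[OF h] continuous_on_bergman_weight
      by (intro set_borel_measurable_disc continuous_intros)
    have "\<bar>bergman_weight \<alpha> z * (cmod (h z))\<^sup>2\<bar> \<le> \<bar>G z\<bar>" if "z \<in> ball 0 1" for z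
      using le[OF that] bergman_weight_pos[OF \<open>\<alpha> > -1\<close> that] by simp
    then show "AE z in lborel. z \<in> ball 0 1 \<longrightarrow>
        norm (bergman_weight \<alpha> z * (cmod (h z))\<^sup>2) \<le> norm (G z)"
      by simp
  qed
  with h show ?thesis
    by (simp add: bergman_space_def)
qed

lemma bergman_space_add:
  assumes "\<alpha> > -1" "f \<in> bergman_space \<alpha>" "g \<in> bergman_space \<alpha>"
  shows "(\<lambda>z. f z + g z) \<in> bergman_space \<alpha>"
proof (rule bergman_space_memI)
  show "(\<lambda>z. f z + g z) holomorphic_on ball 0 1"
    using assms by (intro holomorphic_intros bergman_space_holomorphic)
  show "set_integrable lborel (ball 0 1)
      (\<lambda>z. 2 * (bergman_weight \<alpha> z * (cmod (f z))\<^sup>2) + 2 * (bergman_weight \<alpha> z * (cmod (g z))\<^sup>2))"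
    using assms by (intro set_integral_add set_integrable_mult_right bergman_space_set_integrable)
  fix z :: complex
  assume "z \<in> ball 0 1"
  have "(cmod (f z + g z))\<^sup>2 \<le> (cmod (f z) + cmod (g z))\<^sup>2"
    by (intro power_mono norm_triangle_ineq) auto
  also have "\<dots> \<le> 2 * (cmod (f z))\<^sup>2 + 2 * (cmod (g z))\<^sup>2"
    using sum_squares_bound[of "cmod (f z)" "cmod (g z)"]
    by (simp add: power2_sum)
  finally have "bergman_weight \<alpha> z * (cmod (f z + g z))\<^sup>2
      \<le> bergman_weight \<alpha> z * (2 * (cmod (f z))\<^sup>2 + 2 * (cmod (g z))\<^sup>2)"
    using bergman_weight_pos[OF \<open>\<alpha> > -1\<close> \<open>z \<in> ball 0 1\<close>] by (intro mult_left_mono) auto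
  then show "bergman_weight \<alpha> z * (cmod (f z + g z))\<^sup>2
      \<le> 2 * (bergman_weight \<alpha> z * (cmod (f z))\<^sup>2) + 2 * (bergman_weight \<alpha> z * (cmod (g z))\<^sup>2)"
    by (simp add: algebra_simps)
qed (use assms in auto)

lemma bergman_space_cmult:
  assumes "\<alpha> > -1" "f \<in> bergman_space \<alpha>"
  shows "(\<lambda>z. c * f z) \<in> bergman_space \<alpha>"
proof (rule bergman_space_memI)
  show "(\<lambda>z. c * f z) holomorphic_on ball 0 1"
    using assms by (intro holomorphic_intros bergman_space_holomorphic)
  show "set_integrable lborel (ball 0 1) (\<lambda>z. (cmod c)\<^sup>2 * (bergman_weight \<alpha> z * (cmod (f z))\<^sup>2))"
    using assms by (intro set_integrable_mult_right bergman_space_set_integrable)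
qed (use assms in \<open>auto simp: norm_mult power_mult_distrib\<close>)

lemma bergman_space_zero: "(\<lambda>z. 0) \<in> bergman_space \<alpha>"
  by (simp add: bergman_space_def set_integrable_def)

lemma bergman_space_sum:
  assumes "\<alpha> > -1" "finite J" "\<And>j. j \<in> J \<Longrightarrow> g j \<in> bergman_space \<alpha>"
  shows "(\<lambda>z. \<Sum>j\<in>J. g j z) \<in> bergman_space \<alpha>"
  using assms(2,3)
  by (induction J rule: finite_induct) (simp_all add: bergman_space_zero bergman_space_add[OF assms(1)])

lemma bergman_space_power: "\<alpha> > -1 \<Longrightarrow> (\<lambda>z. z ^ j) \<in> bergman_space \<alpha>"
proof (rule bergman_space_memI)
  assume "\<alpha> > -1"
  then show "set_integrable lborel (ball 0 1) (bergman_weight \<alpha>)"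
    by (rule set_integrable_bergman_weight)
  fix z :: complex
  assume z: "z \<in> ball 0 1"
  then have "(cmod (z ^ j))\<^sup>2 \<le> 1"
    by (simp add: norm_power power_le_one less_imp_le)
  then show "bergman_weight \<alpha> z * (cmod (z ^ j))\<^sup>2 \<le> bergman_weight \<alpha> z"
    using bergman_weight_pos[OF \<open>\<alpha> > -1\<close> z] by (simp add: mult_left_le)
qed (auto intro: holomorphic_intros)

lemma bergman_space_rotation:
  assumes "\<alpha> > -1" "f \<in> bergman_space \<alpha>" "norm u = 1"
  shows "(\<lambda>z. f (u * z)) \<in> bergman_space \<alpha>"
proof -
  have "(\<lambda>z. u * z) ` ball 0 1 \<subseteq> ball 0 1"
    using assms(3) by (auto simp: norm_mult)
  then have "(\<lambda>z. f (u * z)) holomorphic_on ball 0 1"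
    using holomorphic_on_compose_gen[of "\<lambda>z. u * z" "ball 0 1" f "ball 0 1"] bergman_space_holomorphic[OF assms(2)]
    by (auto simp: o_def intro: holomorphic_intros)
  moreover have "set_borel_measurable lborel (ball 0 1) (\<lambda>z. bergman_weight \<alpha> z * (cmod (f z))\<^sup>2)"
    using bergman_space_continuous_on[OF assms(2)] continuous_on_bergman_weight
    by (intro set_borel_measurable_disc continuous_intros)
  then have "set_integrable lborel (ball 0 1)
      (\<lambda>z. bergman_weight \<alpha> (u * z) * (cmod (f (u * z)))\<^sup>2)"
    using bergman_space_set_integrable[OF assms(2)] set_integrable_ball_rotation_iff[OF assms(3)]
    by blast
  ultimately show ?thesis
    by (simp add: bergman_space_def bergman_weight_rotation[OF assms(3)])
qed

lemma bergman_inner_integrable: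
  assumes "\<alpha> > -1" "f \<in> bergman_space \<alpha>" "g \<in> bergman_space \<alpha>"
  shows "set_integrable lborel (ball 0 1) (\<lambda>z. complex_of_real (bergman_weight \<alpha> z) * f z * cnj (g z))"
proof (rule set_integrable_bound)
  show "set_integrable lborel (ball 0 1)
      (\<lambda>z. bergman_weight \<alpha> z * (cmod (f z))\<^sup>2 + bergman_weight \<alpha> z * (cmod (g z))\<^sup>2)"
    using assms by (intro set_integral_add bergman_space_set_integrable)
  show "set_borel_measurable lborel (ball 0 1) (\<lambda>z. complex_of_real (bergman_weight \<alpha> z) * f z * cnj (g z))"
    using assms continuous_on_bergman_weight
    by (intro set_borel_measurable_disc continuous_intros bergman_space_continuous_on)
  have "cmod (complex_of_real (bergman_weight \<alpha> z) * f z * cnj (g z))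
      \<le> \<bar>bergman_weight \<alpha> z * (cmod (f z))\<^sup>2 + bergman_weight \<alpha> z * (cmod (g z))\<^sup>2\<bar>"
    if "z \<in> ball 0 1" for z
  proof -
    have "cmod (f z) * cmod (g z) \<le> (cmod (f z))\<^sup>2 + (cmod (g z))\<^sup>2"
      using sum_squares_bound[of "cmod (f z)" "cmod (g z)"]
        mult_nonneg_nonneg[OF norm_ge_zero norm_ge_zero, of "f z" "g z"]
      by linarith
    then show ?thesis
      using bergman_weight_pos[OF assms(1) that]
      by (simp add: norm_mult mult_left_mono flip: distrib_left)
  qed
  then show "AE z in lborel. z \<in> ball 0 1 \<longrightarrow> norm (complex_of_real (bergman_weight \<alpha> z) * f z * cnj (g z))
      \<le> norm (bergman_weight \<alpha> z * (cmod (f z))\<^sup>2 + bergman_weight \<alpha> z * (cmod (g z))\<^sup>2)"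
    by simp
qed

lemma bergman_inner_cong:
  assumes "\<And>z. z \<in> ball 0 1 \<Longrightarrow> f z = f' z" "\<And>z. z \<in> ball 0 1 \<Longrightarrow> g z = g' z"
  shows "bergman_inner \<alpha> f g = bergman_inner \<alpha> f' g'"
  unfolding bergman_inner_def using assms by (intro set_lebesgue_integral_cong) auto

lemma bergman_inner_scale:
  "bergman_inner \<alpha> (\<lambda>z. a * f z) (\<lambda>z. b * g z) = a * cnj b * bergman_inner \<alpha> f g"
proof -
  have "bergman_inner \<alpha> (\<lambda>z. a * f z) (\<lambda>z. b * g z)
      = (LINT z:ball 0 1|lborel. a * cnj b * (complex_of_real (bergman_weight \<alpha> z) * f z * cnj (g z)))"
    unfolding bergman_inner_def by (simp add: mult_ac)
  then show ?thesis
    unfolding bergman_inner_def by simp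
qed

lemma bergman_inner_sum:
  assumes "\<alpha> > -1"
    and "\<And>j. j \<in> J \<Longrightarrow> g j \<in> bergman_space \<alpha>" "\<And>m. m \<in> M \<Longrightarrow> h m \<in> bergman_space \<alpha>"
  shows "bergman_inner \<alpha> (\<lambda>z. \<Sum>j\<in>J. c j * g j z) (\<lambda>z. \<Sum>m\<in>M. h m z)
       = (\<Sum>j\<in>J. \<Sum>m\<in>M. c j * bergman_inner \<alpha> (g j) (h m))"
proof -
  define I where "I = (\<lambda>j m z. c j * (complex_of_real (bergman_weight \<alpha> z) * g j z * cnj (h m z)))"
  have I: "set_integrable lborel (ball 0 1) (I j m)" if "j \<in> J" "m \<in> M" for j m
    unfolding I_def using assms(2)[OF that(1)] assms(3)[OF that(2)]
    by (intro set_integrable_mult_right bergman_inner_integrable[OF assms(1)])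
  have expand: "complex_of_real (bergman_weight \<alpha> z) * (\<Sum>j\<in>J. c j * g j z) * cnj (\<Sum>m\<in>M. h m z)
      = (\<Sum>j\<in>J. \<Sum>m\<in>M. I j m z)" for z
  proof -
    have "complex_of_real (bergman_weight \<alpha> z) * (\<Sum>j\<in>J. c j * g j z) * cnj (\<Sum>m\<in>M. h m z)
        = complex_of_real (bergman_weight \<alpha> z) * ((\<Sum>j\<in>J. c j * g j z) * (\<Sum>m\<in>M. cnj (h m z)))"
      by (simp add: cnj_sum mult.assoc)
    also have "\<dots> = (\<Sum>j\<in>J. \<Sum>m\<in>M. complex_of_real (bergman_weight \<alpha> z) * (c j * g j z * cnj (h m z)))"
      by (subst sum_distrib_right) (simp add: sum_distrib_left)
    also have "\<dots> = (\<Sum>j\<in>J. \<Sum>m\<in>M. I j m z)"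
      by (simp add: I_def mult_ac)
    finally show ?thesis .
  qed
  have "bergman_inner \<alpha> (\<lambda>z. \<Sum>j\<in>J. c j * g j z) (\<lambda>z. \<Sum>m\<in>M. h m z)
      = set_lebesgue_integral lborel (ball 0 1) (\<lambda>z. \<Sum>j\<in>J. \<Sum>m\<in>M. I j m z)"
    unfolding bergman_inner_def expand ..
  also have "\<dots> = (\<Sum>j\<in>J. \<Sum>m\<in>M. set_lebesgue_integral lborel (ball 0 1) (I j m))"
    using I by (simp add: set_integral_sum set_integrable_sum)
  also have "\<dots> = (\<Sum>j\<in>J. \<Sum>m\<in>M. c j * bergman_inner \<alpha> (g j) (h m))"
    by (simp add: I_def bergman_inner_def)
  finally show ?thesis .
qed

lemma bergman_norm_integral_nonneg:
  assumes "\<alpha> > -1"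
  shows "0 \<le> (LINT z:ball 0 1|lborel. bergman_weight \<alpha> z * (cmod (f z))\<^sup>2)"
  using bergman_weight_pos[OF assms] unfolding set_lebesgue_integral_def
  by (intro Bochner_Integration.integral_nonneg) (simp add: indicator_def less_imp_le)

(* Needs alpha > -1 because sqrt is odd on the reals. *)
lemma bergman_norm_nonneg: "\<alpha> > -1 \<Longrightarrow> 0 \<le> bergman_norm \<alpha> f"
  by (simp add: bergman_norm_def bergman_norm_integral_nonneg)

lemma bergman_norm_cmult: "bergman_norm \<alpha> (\<lambda>z. c * f z) = cmod c * bergman_norm \<alpha> f"
proof -
  have "(\<lambda>z. bergman_weight \<alpha> z * (cmod (c * f z))\<^sup>2)
      = (\<lambda>z. (cmod c)\<^sup>2 * (bergman_weight \<alpha> z * (cmod (f z))\<^sup>2))"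
    by (simp add: fun_eq_iff norm_mult power_mult_distrib mult.left_commute)
  then show ?thesis
    unfolding bergman_norm_def by (simp add: real_sqrt_mult)
qed

lemma bergman_inner_self:
  assumes "\<alpha> > -1"
  shows "bergman_inner \<alpha> f f = complex_of_real ((bergman_norm \<alpha> f)\<^sup>2)"
proof -
  have pointwise: "complex_of_real (bergman_weight \<alpha> z) * f z * cnj (f z)
      = complex_of_real (bergman_weight \<alpha> z * (cmod (f z))\<^sup>2)" for z
    using complex_norm_square[of "f z"] by (simp add: mult.assoc)
  have "bergman_inner \<alpha> f f
      = (LINT z:ball 0 1|lborel. complex_of_real (bergman_weight \<alpha> z * (cmod (f z))\<^sup>2))"
    unfolding bergman_inner_def pointwise ..
  also have "\<dots> = complex_of_real (LINT z:ball 0 1|lborel. bergman_weight \<alpha> z * (cmod (f z))\<^sup>2)"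
    by (rule set_integral_complex_of_real)
  finally show ?thesis
    using bergman_norm_integral_nonneg[OF assms] by (simp add: bergman_norm_def)
qed

lemma bergman_inner_rotation:
  assumes "\<alpha> > -1" "f \<in> bergman_space \<alpha>" "g \<in> bergman_space \<alpha>" "norm u = 1"
  shows "bergman_inner \<alpha> (\<lambda>z. f (u * z)) (\<lambda>z. g (u * z)) = bergman_inner \<alpha> f g"
proof -
  have "set_borel_measurable lborel (ball 0 1)
      (\<lambda>z. complex_of_real (bergman_weight \<alpha> z) * f z * cnj (g z))"
    using assms(2,3) continuous_on_bergman_weight
    by (intro set_borel_measurable_disc continuous_intros bergman_space_continuous_on)
  from set_integral_ball_rotation[OF assms(4) this] show ?thesis
    by (simp add: bergman_inner_def bergman_weight_rotation[OF assms(4)])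
qed

lemma bergman_inner_rotation_eigenfunctions_orthogonal:
  assumes "\<alpha> > -1" "f \<in> bergman_space \<alpha>" "g \<in> bergman_space \<alpha>" "norm u = 1"
    and "\<And>z. z \<in> ball 0 1 \<Longrightarrow> f (u * z) = p * f z"
    and "\<And>z. z \<in> ball 0 1 \<Longrightarrow> g (u * z) = q * g z"
    and "norm q = 1" "p \<noteq> q"
  shows "bergman_inner \<alpha> f g = 0"
proof -
  have "bergman_inner \<alpha> f g = bergman_inner \<alpha> (\<lambda>z. f (u * z)) (\<lambda>z. g (u * z))"
    using bergman_inner_rotation[OF assms(1-4)] by simp
  also have "\<dots> = bergman_inner \<alpha> (\<lambda>z. p * f z) (\<lambda>z. q * g z)"
    using assms(5,6) by (intro bergman_inner_cong) auto
  also have "\<dots> = p * cnj q * bergman_inner \<alpha> f g"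
    by (rule bergman_inner_scale)
  finally have "(1 - p * cnj q) * bergman_inner \<alpha> f g = 0"
    by (simp add: algebra_simps)
  moreover have "p * cnj q \<noteq> 1"
  proof
    assume "p * cnj q = 1"
    then have "p * (cnj q * q) = q"
      by (simp add: mult.assoc[symmetric])
    with \<open>norm q = 1\<close> have "p = q"
      by (simp add: mult.commute complex_norm_square[symmetric])
    with \<open>p \<noteq> q\<close> show False ..
  qed
  ultimately show ?thesis
    by simp
qed

lemma bergman_inner_orthogonal_sum:
  assumes "\<alpha> > -1" "finite J" "\<And>j. j \<in> J \<Longrightarrow> g j \<in> bergman_space \<alpha>"
    and orth: "\<And>j m. j \<in> J \<Longrightarrow> m \<in> J \<Longrightarrow> j \<noteq> m \<Longrightarrow> bergman_inner \<alpha> (g j) (g m) = 0"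
  shows "bergman_inner \<alpha> (\<lambda>z. \<Sum>j\<in>J. c j * g j z) (\<lambda>z. \<Sum>j\<in>J. g j z)
       = (\<Sum>j\<in>J. c j * bergman_inner \<alpha> (g j) (g j))"
proof -
  have "(\<Sum>m\<in>J. c j * bergman_inner \<alpha> (g j) (g m)) = c j * bergman_inner \<alpha> (g j) (g j)"
    if "j \<in> J" for j
  proof -
    have "c j * bergman_inner \<alpha> (g j) (g m) = 0" if "m \<in> J - {j}" for m
      using orth[of j m] \<open>j \<in> J\<close> that by auto
    then have "(\<Sum>m\<in>J - {j}. c j * bergman_inner \<alpha> (g j) (g m)) = 0"
      by (rule sum.neutral[rule_format])
    then show ?thesis
      using that assms(2) by (simp add: sum.remove[of _ j])
  qed
  then show ?thesis
    using bergman_inner_sum[OF assms(1), of J g J g c] assms(3) by simp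
qed

lemma set_integral_ball_pos:
  fixes F :: "complex \<Rightarrow> real"
  assumes "0 < r" "set_integrable lborel (ball c r) F"
    and pos: "\<And>z. z \<in> ball c r \<Longrightarrow> z \<noteq> a \<Longrightarrow> 0 < F z"
  shows "0 < (LINT z:ball c r|lborel. F z)"
proof -
  define G where "G = (\<lambda>z. indicator (ball c r) z * F z)"
  have G_nonneg: "AE z in lborel. 0 \<le> G z"
    using AE_lborel_singleton[of a] by (rule eventually_mono) (use pos in \<open>force simp: G_def indicator_def\<close>)
  have "\<not> (AE z in lborel. G z = 0)"
  proof
    assume "AE z in lborel. G z = 0"
    then have "AE z in lborel. G z = 0 \<and> z \<noteq> a"
      using AE_lborel_singleton[of a] by (rule eventually_conj)
    then have "AE z in lborel. z \<notin> ball c r"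
      by (rule eventually_mono) (use pos in \<open>force simp: G_def\<close>)
    from emeasure_eq_0_AE[OF this] have "emeasure lborel (ball c r) = 0"
      by (simp add: ball_def)
    with \<open>0 < r\<close> show False
      by (simp add: emeasure_ball unit_ball_vol_2)
  qed
  moreover have "integrable lborel G"
    using assms(2) by (simp add: G_def set_integrable_def)
  ultimately have "0 < integral\<^sup>L lborel G"
    using integral_nonneg_eq_0_iff_AE[OF _ G_nonneg] integral_nonneg_AE[OF G_nonneg]
    by (auto simp: order_less_le)
  then show ?thesis
    by (simp add: set_lebesgue_integral_def G_def)
qed

lemma bergman_norm_power_pos:
  assumes "\<alpha> > -1"
  shows "0 < bergman_norm \<alpha> (\<lambda>z. z ^ j)"
proof -
  have "0 < (LINT z:ball 0 1|lborel. bergman_weight \<alpha> z * (cmod (z ^ j))\<^sup>2)"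
    using bergman_space_set_integrable[OF bergman_space_power[OF assms]] bergman_weight_pos[OF assms]
    by (intro set_integral_ball_pos[where a = 0]) auto
  then show ?thesis
    by (simp add: bergman_norm_def)
qed

section \<open>Roots of unity and the eigencomponents of a rotation\<close>

definition primitive_root_of_unity :: "nat \<Rightarrow> complex \<Rightarrow> bool" where
  "primitive_root_of_unity n u \<longleftrightarrow> 0 < n \<and> u ^ n = 1 \<and> (\<forall>k. 0 < k \<longrightarrow> k < n \<longrightarrow> u ^ k \<noteq> 1)"

lemma primitive_root_of_unity_norm:
  assumes "primitive_root_of_unity n u"
  shows "norm u = 1"
  using assms power_eq_1_iff[of u n] by (auto simp: primitive_root_of_unity_def)

lemma primitive_root_of_unity_inj_on:
  assumes "primitive_root_of_unity n u"
  shows "inj_on (\<lambda>k. u ^ k) {..<n}"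
proof -
  have "u \<noteq> 0"
    using primitive_root_of_unity_norm[OF assms] by auto
  have False if "j < m" "m < n" "u ^ j = u ^ m" for j m
  proof -
    have "u ^ j * u ^ (m - j) = u ^ m"
      using \<open>j < m\<close> by (simp flip: power_add)
    then have "u ^ (m - j) = 1"
      using \<open>u ^ j = u ^ m\<close> \<open>u \<noteq> 0\<close> by simp
    with that assms show False
      by (simp add: primitive_root_of_unity_def)
  qed
  then show ?thesis
    by (metis inj_onI lessThan_iff linorder_neqE_nat)
qed

lemma sum_powers_root_of_unity:
  fixes v :: "'a::field"
  assumes "v ^ n = 1" "v \<noteq> 1"
  shows "(\<Sum>j<n. v ^ j) = 0"
  using assms by (simp add: sum_gp_strict)

lemma exp_2pi_i_div_power: "exp (2 * pi * \<i> / of_nat n) ^ k = exp (2 * pi * \<i> * of_nat k / of_nat n)"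
  by (simp add: exp_of_nat_mult[symmetric] field_simps)

lemma primitive_root_of_unity_exp:
  assumes "0 < n"
  shows "primitive_root_of_unity n (exp (2 * pi * \<i> / of_nat n))"
proof -
  have not_one: "exp (2 * pi * \<i> * of_nat k / of_nat n) \<noteq> 1" if "0 < k" "k < n" for k
  proof
    assume "exp (2 * pi * \<i> * of_nat k / of_nat n) = 1"
    then obtain m :: int where "2 * pi * (real k / real n) = 2 * pi * of_int m"
      by (auto simp: exp_eq_1 Im_divide_of_real[of _ "real n", simplified])
    then have "real k / real n = of_int m"
      by (subst (asm) mult_left_cancel) auto
    moreover have "0 < real k / real n" "real k / real n < 1"
      using that by auto
    ultimately show False
      by simp
  qed
  show ?thesis
    unfolding primitive_root_of_unity_def exp_2pi_i_div_power using assms not_one by simp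
qed

definition rotation_eigencomponent ::
    "nat \<Rightarrow> complex \<Rightarrow> (complex \<Rightarrow> complex) \<Rightarrow> nat \<Rightarrow> complex \<Rightarrow> complex" where
  "rotation_eigencomponent n u f j z = (\<Sum>k<n. cnj u ^ (j * k) * f (u ^ k * z)) / of_nat n"

lemma bergman_space_rotation_eigencomponent:
  assumes "\<alpha> > -1" "f \<in> bergman_space \<alpha>" "norm u = 1"
  shows "rotation_eigencomponent n u f j \<in> bergman_space \<alpha>"
proof -
  have "(\<lambda>z. (1 / of_nat n) * (\<Sum>k<n. cnj u ^ (j * k) * f (u ^ k * z))) \<in> bergman_space \<alpha>"
    using assms by (intro bergman_space_cmult bergman_space_sum bergman_space_rotation) (auto simp: norm_power)
  then show ?thesis
    by (simp add: rotation_eigencomponent_def[abs_def])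
qed

lemma rotation_eigencomponent_rotation:
  assumes "u ^ n = 1" "norm u = 1"
  shows "rotation_eigencomponent n u f j (u * z) = u ^ j * rotation_eigencomponent n u f j z"
proof -
  define h where "h k = cnj u ^ (j * k) * f (u ^ k * z)" for k
  have "u ^ j * cnj u ^ j = 1"
    using assms(2) complex_norm_square[of u] by (simp flip: power_mult_distrib)
  moreover have "u ^ j * h (Suc k) = (u ^ j * cnj u ^ j) * (cnj u ^ (j * k) * f (u ^ k * (u * z)))" for k
    by (simp add: h_def mult_Suc_right power_add mult_ac)
  ultimately have shift: "cnj u ^ (j * k) * f (u ^ k * (u * z)) = u ^ j * h (Suc k)" for k
    by simp
  have "cnj u ^ (j * n) = 1"
    using assms(1) by (simp add: power_mult mult.commute[of j] flip: complex_cnj_power)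
  then have "h n = h 0"
    using assms(1) by (simp add: h_def)
  then have "(\<Sum>k<n. h (Suc k)) = (\<Sum>k<n. h k)"
    using sum.lessThan_Suc_shift[of h n] by (simp add: add.commute)
  then have "rotation_eigencomponent n u f j (u * z) = u ^ j * (\<Sum>k<n. h k) / of_nat n"
    by (simp add: rotation_eigencomponent_def shift flip: sum_distrib_left)
  then show ?thesis
    by (simp add: rotation_eigencomponent_def h_def)
qed

lemma sum_rotation_eigencomponent:
  assumes "primitive_root_of_unity n u"
  shows "(\<Sum>j<n. rotation_eigencomponent n u f j z) = f z"
proof -
  have n: "0 < n" "u ^ n = 1"
    using assms by (simp_all add: primitive_root_of_unity_def)
  have geometric: "(\<Sum>j<n. (cnj u ^ k) ^ j) = (if k = 0 then of_nat n else 0)" if "k < n" for k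
  proof (cases "k = 0")
    case False
    with that assms have "cnj u ^ k \<noteq> 1"
      by (simp add: primitive_root_of_unity_def flip: complex_cnj_power)
    moreover have "(cnj u ^ k) ^ n = cnj (u ^ n) ^ k"
      by (simp only: complex_cnj_power power_mult[symmetric] mult.commute)
    ultimately show ?thesis
      using False n sum_powers_root_of_unity by simp
  qed simp
  have power_swap: "cnj u ^ (j * k) = (cnj u ^ k) ^ j" for j k
    by (simp only: power_mult[symmetric] mult.commute)
  have "(\<Sum>j<n. rotation_eigencomponent n u f j z)
      = (\<Sum>k<n. (\<Sum>j<n. (cnj u ^ k) ^ j) * f (u ^ k * z)) / of_nat n"
    unfolding rotation_eigencomponent_def sum_divide_distrib[symmetric] power_swap
    by (subst sum.swap) (simp only: sum_distrib_right)
  also have "\<dots> = (\<Sum>k<n. (if k = 0 then of_nat n * f z else 0)) / of_nat n"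
    using geometric by (intro arg_cong[where f = "\<lambda>x. x / _"] sum.cong) auto
  also have "\<dots> = f z"
    using n by simp
  finally show ?thesis .
qed

section \<open>The numerical range of a rotation\<close>

lemma bergman_inner_sum_rotation_eigenfunctions:
  assumes "\<alpha> > -1" "primitive_root_of_unity n u"
    and g: "\<And>j. j < n \<Longrightarrow> g j \<in> bergman_space \<alpha>"
    and eigen: "\<And>j z. j < n \<Longrightarrow> z \<in> ball 0 1 \<Longrightarrow> g j (u * z) = u ^ j * g j z"
  shows "bergman_inner \<alpha> ((\<lambda>z. \<Sum>j<n. g j z) \<circ> (\<lambda>z. u * z)) (\<lambda>z. \<Sum>j<n. g j z)
      = (\<Sum>j<n. (bergman_norm \<alpha> (g j))\<^sup>2 *\<^sub>R u ^ j)"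
    and "(bergman_norm \<alpha> (\<lambda>z. \<Sum>j<n. g j z))\<^sup>2 = (\<Sum>j<n. (bergman_norm \<alpha> (g j))\<^sup>2)"
proof -
  have u: "norm u = 1"
    using assms(2) by (rule primitive_root_of_unity_norm)
  have orth: "bergman_inner \<alpha> (g j) (g m) = 0" if "j < n" "m < n" "j \<noteq> m" for j m
  proof (rule bergman_inner_rotation_eigenfunctions_orthogonal[OF assms(1) g[OF that(1)] g[OF that(2)] u])
    show "g j (u * z) = u ^ j * g j z" "g m (u * z) = u ^ m * g m z" if "z \<in> ball 0 1" for z
      using eigen \<open>j < n\<close> \<open>m < n\<close> that by auto
    show "norm (u ^ m) = 1"
      using u by (simp add: norm_power)
    show "u ^ j \<noteq> u ^ m"
      using inj_onD[OF primitive_root_of_unity_inj_on[OF assms(2)]] that by auto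
  qed
  have "bergman_inner \<alpha> ((\<lambda>z. \<Sum>j<n. g j z) \<circ> (\<lambda>z. u * z)) (\<lambda>z. \<Sum>j<n. g j z)
      = bergman_inner \<alpha> (\<lambda>z. \<Sum>j<n. u ^ j * g j z) (\<lambda>z. \<Sum>j<n. g j z)"
    using eigen by (intro bergman_inner_cong sum.cong) auto
  also have "\<dots> = (\<Sum>j<n. u ^ j * bergman_inner \<alpha> (g j) (g j))"
    using g orth by (intro bergman_inner_orthogonal_sum[OF assms(1)]) auto
  finally show "bergman_inner \<alpha> ((\<lambda>z. \<Sum>j<n. g j z) \<circ> (\<lambda>z. u * z)) (\<lambda>z. \<Sum>j<n. g j z)
      = (\<Sum>j<n. (bergman_norm \<alpha> (g j))\<^sup>2 *\<^sub>R u ^ j)"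
    by (simp add: bergman_inner_self[OF assms(1)] scaleR_conv_of_real mult.commute)
  have "complex_of_real ((bergman_norm \<alpha> (\<lambda>z. \<Sum>j<n. g j z))\<^sup>2)
      = bergman_inner \<alpha> (\<lambda>z. \<Sum>j<n. 1 * g j z) (\<lambda>z. \<Sum>j<n. g j z)"
    by (simp add: bergman_inner_self[OF assms(1)])
  also have "\<dots> = (\<Sum>j<n. 1 * bergman_inner \<alpha> (g j) (g j))"
    using g orth by (intro bergman_inner_orthogonal_sum[OF assms(1)]) auto
  finally show "(bergman_norm \<alpha> (\<lambda>z. \<Sum>j<n. g j z))\<^sup>2 = (\<Sum>j<n. (bergman_norm \<alpha> (g j))\<^sup>2)"
    by (simp add: bergman_inner_self[OF assms(1)] flip: of_real_sum of_real_power)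
qed

lemma bergman_inner_rotation_in_convex_hull:
  assumes "\<alpha> > -1" "primitive_root_of_unity n u" "f \<in> bergman_space \<alpha>" "bergman_norm \<alpha> f = 1"
  shows "bergman_inner \<alpha> (f \<circ> (\<lambda>z. u * z)) f \<in> convex hull ((\<lambda>k. u ^ k) ` {..<n})"
proof -
  define g where "g = rotation_eigencomponent n u f"
  have f: "f = (\<lambda>z. \<Sum>j<n. g j z)"
    using sum_rotation_eigencomponent[OF assms(2)] by (simp add: g_def fun_eq_iff)
  have u: "norm u = 1" "u ^ n = 1"
    using assms(2) by (simp_all add: primitive_root_of_unity_norm primitive_root_of_unity_def)
  note decomposition = bergman_inner_sum_rotation_eigenfunctions[OF assms(1,2), of g]
  have g: "g j \<in> bergman_space \<alpha>" "g j (u * z) = u ^ j * g j z" for j z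
    unfolding g_def using assms u
    by (simp_all add: bergman_space_rotation_eigencomponent rotation_eigencomponent_rotation)
  then have "(\<Sum>j<n. (bergman_norm \<alpha> (g j))\<^sup>2) = 1"
    using decomposition(2) assms(4) f by simp
  then have "(\<Sum>j<n. (bergman_norm \<alpha> (g j))\<^sup>2 *\<^sub>R u ^ j) \<in> convex hull ((\<lambda>k. u ^ k) ` {..<n})"
    by (intro convex_sum convex_convex_hull) (auto intro: hull_inc)
  then show ?thesis
    using decomposition(1) g by (subst (1 2) f) simp
qed

lemma bergman_inner_rotation_attains_convex_hull:
  assumes "\<alpha> > -1" "primitive_root_of_unity n u" "p \<in> convex hull ((\<lambda>k. u ^ k) ` {..<n})"
  obtains f where "f \<in> bergman_space \<alpha>" "bergman_norm \<alpha> f = 1" "bergman_inner \<alpha> (f \<circ> (\<lambda>z. u * z)) f = p"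
proof -
  have inj: "inj_on (\<lambda>k. u ^ k) {..<n}"
    using assms(2) by (rule primitive_root_of_unity_inj_on)
  obtain v where "\<forall>x\<in>(\<lambda>k. u ^ k) ` {..<n}. 0 \<le> v x" "sum v ((\<lambda>k. u ^ k) ` {..<n}) = 1"
      "(\<Sum>x\<in>(\<lambda>k. u ^ k) ` {..<n}. v x *\<^sub>R x) = p"
    using assms(3) by (auto simp: convex_hull_finite)
  then have t: "\<And>k. k < n \<Longrightarrow> 0 \<le> v (u ^ k)" "(\<Sum>k<n. v (u ^ k)) = 1" "(\<Sum>k<n. v (u ^ k) *\<^sub>R u ^ k) = p"
    by (simp_all add: sum.reindex[OF inj])
  define g where "g j z = complex_of_real (sqrt (v (u ^ j)) / bergman_norm \<alpha> (\<lambda>z. z ^ j)) * z ^ j" for j z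
  have g: "g j \<in> bergman_space \<alpha>" "g j (u * z) = u ^ j * g j z" for j z
    unfolding g_def[abs_def] using assms(1)
    by (intro bergman_space_cmult bergman_space_power) (simp_all add: power_mult_distrib)
  have "(bergman_norm \<alpha> (g j))\<^sup>2 = v (u ^ j)" if "j < n" for j
    using t(1)[OF that] bergman_norm_power_pos[OF assms(1), of j]
    unfolding g_def[abs_def] bergman_norm_cmult by (simp add: norm_divide power_mult_distrib power_divide)
  then have "(bergman_norm \<alpha> (\<lambda>z. \<Sum>j<n. g j z))\<^sup>2 = 1"
       "bergman_inner \<alpha> ((\<lambda>z. \<Sum>j<n. g j z) \<circ> (\<lambda>z. u * z)) (\<lambda>z. \<Sum>j<n. g j z) = p"
    using bergman_inner_sum_rotation_eigenfunctions[OF assms(1,2), of g] g t by simp_all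
  moreover have "(\<lambda>z. \<Sum>j<n. g j z) \<in> bergman_space \<alpha>"
    using g assms(1) by (intro bergman_space_sum) auto
  ultimately show ?thesis
    using that bergman_norm_nonneg[OF assms(1), of "\<lambda>z. \<Sum>j<n. g j z"] by (simp add: power2_eq_1_iff)
qed

theorem comp_numerical_range_rotation:
  assumes "\<alpha> > -1" "primitive_root_of_unity n u"
  shows "comp_numerical_range \<alpha> (\<lambda>z. u * z) = convex hull ((\<lambda>k. u ^ k) ` {..<n})"
proof (intro subset_antisym subsetI)
  fix p
  assume "p \<in> comp_numerical_range \<alpha> (\<lambda>z. u * z)"
  then show "p \<in> convex hull ((\<lambda>k. u ^ k) ` {..<n})"
    using bergman_inner_rotation_in_convex_hull[OF assms] by (auto simp: comp_numerical_range_def)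
next
  fix p
  assume "p \<in> convex hull ((\<lambda>k. u ^ k) ` {..<n})"
  then obtain f where "f \<in> bergman_space \<alpha>" "bergman_norm \<alpha> f = 1" "bergman_inner \<alpha> (f \<circ> (\<lambda>z. u * z)) f = p"
    by (rule bergman_inner_rotation_attains_convex_hull[OF assms])
  then show "p \<in> comp_numerical_range \<alpha> (\<lambda>z. u * z)"
    unfolding comp_numerical_range_def by blast
qed

lemma convex_hull_one_minus_one: "convex hull {1, -1 :: complex} = {complex_of_real t | t. -1 \<le> t \<and> t \<le> 1}"
proof -
  have "{1, -1 :: complex} = complex_of_real ` {-1, 1}"
    by (simp add: insert_commute)
  then have "convex hull {1, -1 :: complex} = complex_of_real ` (convex hull {-1, 1})"
    by (simp add: convex_hull_linear_image bounded_linear_of_real bounded_linear.linear)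
  also have "convex hull {-1, 1 :: real} = {-1..1}"
    by (simp add: segment_convex_hull[symmetric] closed_segment_eq_real_ivl)
  finally show ?thesis
    unfolding image_def by auto
qed

theorem corollary3p14:
  fixes \<alpha> :: real
  assumes "\<alpha> > -1"
  shows "comp_numerical_range \<alpha> (\<lambda>z. - z) = {complex_of_real t | t. -1 \<le> t \<and> t \<le> 1} \<and>
    (\<forall>n::nat. n > 2 \<longrightarrow> comp_numerical_range \<alpha> (\<lambda>z. exp (2 * pi * \<i> / of_nat n) * z) =
           convex hull {exp (2 * pi * \<i> * of_nat k / of_nat n) | k. k < n})"
proof
  have "primitive_root_of_unity 2 (-1)"
    by (auto simp: primitive_root_of_unity_def less_2_cases_iff)
  moreover have "(\<lambda>k. (-1 :: complex) ^ k) ` {..<2} = {1, -1}"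
    by (simp add: lessThan_Suc numeral_2_eq_2 insert_commute)
  ultimately show "comp_numerical_range \<alpha> (\<lambda>z. - z) = {complex_of_real t | t. -1 \<le> t \<and> t \<le> 1}"
    using comp_numerical_range_rotation[OF assms, of 2 "-1"] by (simp add: convex_hull_one_minus_one)
  show "\<forall>n::nat. n > 2 \<longrightarrow> comp_numerical_range \<alpha> (\<lambda>z. exp (2 * pi * \<i> / of_nat n) * z) =
           convex hull {exp (2 * pi * \<i> * of_nat k / of_nat n) | k. k < n}"
  proof (intro allI impI)
    fix n :: nat
    assume "n > 2"
    have "{exp (2 * pi * \<i> * of_nat k / of_nat n) | k. k < n}
        = (\<lambda>k. exp (2 * pi * \<i> / of_nat n) ^ k) ` {..<n}"
      unfolding exp_2pi_i_div_power by auto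
    then show "comp_numerical_range \<alpha> (\<lambda>z. exp (2 * pi * \<i> / of_nat n) * z) =
           convex hull {exp (2 * pi * \<i> * of_nat k / of_nat n) | k. k < n}"
      using comp_numerical_range_rotation[OF assms primitive_root_of_unity_exp, of n] \<open>n > 2\<close> by simp
  qed
qed

end
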